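(* Let $\alpha_1,\dots,\alpha_m\in\mathbb C$ be distinct. For $i=1,\dots,n$ define the $B_n$-valued functions $$A_i=\sum_{k=1}^m\frac{Y_{i,k}}{z_i-\alpha_k}-\sum_{p\ne i}\frac{\nu s_{ip}}{z_i-z_p}.$$ Then the connection $\nabla$ on the trivial bundle with fiber $B_n$ given by the KZ system $\partial F/\partial z_i=A_iF$ ($i=1,\dots,n$) is flat, i.e. $\partial_iA_j-\partial_jA_i+[A_i,A_j]=0$ for all $i,j$.
   Context: $D$ is a star-shaped graph with $m$ legs, $d_k$ vertices in the $k$-th leg (including the node). $B_n$ is the $\mathbb C[\gamma,\nu]$-algebra ($\gamma=(\gamma_{kj})$) generated by $S_n$ (transpositions $s_{ij}$) and $Y_{i,k}$ ($1\le i\le n$, $1\le k\le m$) with relations, for $i\ne j$: $s_{ij}Y_{i,k}=Y_{j,k}s_{ij}$; $s_{ij}Y_{h,k}=Y_{h,k}s_{ij}$ for $h\ne i,j$; $\prod_{j=1}^{d_k}(Y_{i,k}-\gamma_{kj})=0$; $\sum_kY_{i,k}=\nu\sum_{j\ne i}s_{ij}$; $[Y_{i,k},Y_{j,k}]=\nu(Y_{i,k}-Y_{j,k})s_{ij}$; $[Y_{i,k},Y_{j,l}]=0$ for $k\ne l$. The functions $A_i$ are defined on the complement in $\mathbb C^n$ of the hyperplanes $z_i=z_p$ and $z_i=\alpha_k$. *)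

theory Defs
  imports "HOL-Analysis.Analysis" "HOL-Combinatorics.Transposition"
begin

text \<open>A unital C-algebra structure on a ring 'a is given by a central unital ring
  homomorphism sc from the complex numbers into 'a (scalar c acts as sc c * _).\<close>
definition scalar_structure :: "(complex \<Rightarrow> 'a::ring_1) \<Rightarrow> bool" where
  "scalar_structure sc \<longleftrightarrow>
     (\<forall>a b. sc (a + b) = sc a + sc b) \<and> (\<forall>a b. sc (a * b) = sc a * sc b) \<and>
     sc 1 = 1 \<and> (\<forall>c x. sc c * x = x * sc c)"

definition central :: "'a::ring_1 \<Rightarrow> bool" where
  "central a \<longleftrightarrow> (\<forall>x. a * x = x * a)"

definition commutator :: "'a::ring_1 \<Rightarrow> 'a \<Rightarrow> 'a" where
  "commutator a b = a * b - b * a"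

text \<open>The defining relations of B_n (over the ground ring 'a): Sg is the
  S_n-action (s_ij = Sg (Transposition.transpose i j)), Y i k the generators Y_{i,k},
  gam k j and nu the (central) parameters gamma_{kj}, nu; d k is the number of
  vertices on the k-th leg.\<close>
definition Bn_relations ::
  "nat \<Rightarrow> nat \<Rightarrow> (nat \<Rightarrow> nat) \<Rightarrow> ((nat \<Rightarrow> nat) \<Rightarrow> 'a::ring_1) \<Rightarrow> (nat \<Rightarrow> nat \<Rightarrow> 'a)
    \<Rightarrow> (nat \<Rightarrow> nat \<Rightarrow> 'a) \<Rightarrow> 'a \<Rightarrow> bool" where
  "Bn_relations n m d Sg Y gam nu \<longleftrightarrow>
     central nu \<and> (\<forall>k j. central (gam k j)) \<and>
     Sg id = 1 \<and>
     (\<forall>p q. p permutes {1..n} \<longrightarrow> q permutes {1..n} \<longrightarrow> Sg (p \<circ> q) = Sg p * Sg q) \<and>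
     (\<forall>i\<in>{1..n}. \<forall>j\<in>{1..n}. i \<noteq> j \<longrightarrow>
        (\<forall>k\<in>{1..m}. Sg (Transposition.transpose i j) * Y i k = Y j k * Sg (Transposition.transpose i j)) \<and>
        (\<forall>h\<in>{1..n}. h \<noteq> i \<longrightarrow> h \<noteq> j \<longrightarrow>
           (\<forall>k\<in>{1..m}. Sg (Transposition.transpose i j) * Y h k = Y h k * Sg (Transposition.transpose i j))) \<and>
        (\<forall>k\<in>{1..m}. commutator (Y i k) (Y j k) = nu * (Y i k - Y j k) * Sg (Transposition.transpose i j)) \<and>
        (\<forall>k\<in>{1..m}. \<forall>l\<in>{1..m}. k \<noteq> l \<longrightarrow> commutator (Y i k) (Y j l) = 0)) \<and>
     (\<forall>i\<in>{1..n}. \<forall>k\<in>{1..m}. prod_list (map (\<lambda>j. Y i k - gam k j) [1..<Suc (d k)]) = 0) \<and>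
     (\<forall>i\<in>{1..n}. (\<Sum>k=1..m. Y i k) = nu * (\<Sum>j\<in>{1..n} - {i}. Sg (Transposition.transpose i j)))"

text \<open>'a-valued functions on C^n of the form  z \<mapsto> sum_l c_l(z) b_l  with scalar
  coefficient functions c_l, represented by the list of pairs (c_l, b_l).\<close>
type_synonym 'a coeff_rep = "(((nat \<Rightarrow> complex) \<Rightarrow> complex) \<times> 'a) list"

definition rep_eval :: "(complex \<Rightarrow> 'a::ring_1) \<Rightarrow> 'a coeff_rep \<Rightarrow> (nat \<Rightarrow> complex) \<Rightarrow> 'a" where
  "rep_eval sc R z = sum_list (map (\<lambda>(c, b). sc (c z) * b) R)"

definition rep_pderiv :: "nat \<Rightarrow> 'a coeff_rep \<Rightarrow> 'a coeff_rep" where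
  "rep_pderiv i R = map (\<lambda>(c, b). (\<lambda>z. deriv (\<lambda>w. c (z(i := w))) (z i), b)) R"

definition KZ_A :: "nat \<Rightarrow> nat \<Rightarrow> (nat \<Rightarrow> complex) \<Rightarrow> ((nat \<Rightarrow> nat) \<Rightarrow> 'a::ring_1)
    \<Rightarrow> (nat \<Rightarrow> nat \<Rightarrow> 'a) \<Rightarrow> 'a \<Rightarrow> nat \<Rightarrow> 'a coeff_rep" where
  "KZ_A n m alpha Sg Y nu i =
     map (\<lambda>k. (\<lambda>z. 1 / (z i - alpha k), Y i k)) [1..<Suc m] @
     map (\<lambda>p. (\<lambda>z. - 1 / (z i - z p), nu * Sg (Transposition.transpose i p)))
         (filter (\<lambda>p. p \<noteq> i) [1..<Suc n])"

end

theory Submission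
  imports Defs
begin

text \<open>Only the term \<open>-\<nu> s\<^sub>j\<^sub>i/(z\<^sub>j - z\<^sub>i)\<close> of \<open>A\<^sub>j\<close> depends on \<open>z\<^sub>i\<close>, so
  \<open>\<partial>\<^sub>iA\<^sub>j = -\<nu> s\<^sub>i\<^sub>j/(z\<^sub>i - z\<^sub>j)\<^sup>2\<close> is symmetric in \<open>i, j\<close> and flatness reduces to
  \<open>[A\<^sub>i, A\<^sub>j] = 0\<close>. Expanding the commutator bilinearly, the relations of \<open>B\<^sub>n\<close> kill
  every term except two kinds. First, \<open>[Y\<^sub>i\<^sub>k, Y\<^sub>j\<^sub>k]\<close>, \<open>[Y\<^sub>i\<^sub>k, \<nu> s\<^sub>j\<^sub>i]\<close> and
  \<open>[\<nu> s\<^sub>i\<^sub>j, Y\<^sub>j\<^sub>k]\<close>, which all equal \<open>\<nu> (Y\<^sub>i\<^sub>k - Y\<^sub>j\<^sub>k) s\<^sub>i\<^sub>j\<close>. Second, for each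
  third index \<open>r\<close>, the commutators of \<open>s\<^sub>i\<^sub>j, s\<^sub>i\<^sub>r, s\<^sub>j\<^sub>r\<close>, which are all \<open>\<plusminus>\<close> the
  difference of the two 3-cycles on \<open>{i, j, r}\<close>. In both cases the scalar coefficients
  add up to zero by a partial-fraction identity.\<close>

lemma scalar_structure_zero: "scalar_structure sc \<Longrightarrow> sc 0 = 0"
  unfolding scalar_structure_def by (metis add_cancel_right_right add_0)

lemma scalar_structure_add: "scalar_structure sc \<Longrightarrow> sc (a + b) = sc a + sc b"
  unfolding scalar_structure_def by blast

lemma scalar_structure_mult: "scalar_structure sc \<Longrightarrow> sc (a * b) = sc a * sc b"
  unfolding scalar_structure_def by blast

lemma scalar_structure_commute: "scalar_structure sc \<Longrightarrow> sc a * x = x * sc a"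
  unfolding scalar_structure_def by blast

lemma scalar_structure_scaled_sum_eq_0:
  assumes "scalar_structure sc" and "a + b + c = 0"
  shows "sc a * x + sc b * x + sc c * x = 0"
proof -
  have "sc a + sc b + sc c = 0"
    using assms by (metis scalar_structure_add scalar_structure_zero)
  then show ?thesis
    by (metis distrib_right mult_zero_left)
qed

lemma commutator_add_add:
  "commutator (a + b) (c + d) = commutator a c + commutator a d + commutator b c + commutator b d"
  by (simp add: commutator_def algebra_simps)

lemma commutator_sum_scaled:
  assumes sc: "scalar_structure sc" and "finite X" "finite Z"
  shows "commutator (\<Sum>x\<in>X. sc (f x) * u x) (\<Sum>y\<in>Z. sc (g y) * v y)
       = (\<Sum>x\<in>X. \<Sum>y\<in>Z. sc (f x * g y) * commutator (u x) (v y))"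
proof -
  have scaled_mult: "sc a * p * (sc b * q) = sc (a * b) * (p * q)" for a b p q
    by (metis sc scalar_structure_commute scalar_structure_mult mult.assoc)
  have "commutator (\<Sum>x\<in>X. sc (f x) * u x) (\<Sum>y\<in>Z. sc (g y) * v y)
      = (\<Sum>x\<in>X. \<Sum>y\<in>Z. commutator (sc (f x) * u x) (sc (g y) * v y))"
    unfolding commutator_def sum_product sum_subtractf sum.swap[of _ Z X] ..
  also have "\<dots> = (\<Sum>x\<in>X. \<Sum>y\<in>Z. sc (f x * g y) * commutator (u x) (v y))"
  proof -
    have "sc b * q * (sc a * p) = sc (a * b) * (q * p)" for a b p q
      using scaled_mult[of b q a p] by (simp add: mult.commute)
    then show ?thesis
      by (simp add: commutator_def scaled_mult right_diff_distrib)
  qed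
  finally show ?thesis .
qed

lemma commutator_central_scaled:
  "central c \<Longrightarrow> commutator (c * x) (c * y) = c * c * commutator x y"
  unfolding central_def commutator_def by (metis mult.assoc right_diff_distrib)

lemma commutator_central_scaled_eq_0:
  assumes "central c" and "s * y = y * s"
  shows "commutator y (c * s) = 0" and "commutator (c * s) y = 0"
  using assms unfolding central_def commutator_def by (metis mult.assoc right_minus_eq)+

lemma commutator_central_scaled_right:
  assumes "central c" and "s * y = y' * s"
  shows "commutator y (c * s) = c * (y - y') * s"
  using assms unfolding central_def commutator_def
  by (metis mult.assoc right_diff_distrib left_diff_distrib)

lemma commutator_central_scaled_left:
  assumes "central c" and "s * y' = y * s"
  shows "commutator (c * s) y' = c * (y - y') * s"
  using assms unfolding central_def commutator_def
  by (metis mult.assoc right_diff_distrib left_diff_distrib)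

lemma sum_eq_single:
  "finite S \<Longrightarrow> k \<in> S \<Longrightarrow> (\<And>l. l \<in> S \<Longrightarrow> l \<noteq> k \<Longrightarrow> g l = 0) \<Longrightarrow> sum g S = g k"
  by (simp add: sum.remove)

lemma sum_list_map_upt_Suc_eq_sum: "sum_list (map f [1..<Suc m]) = sum f {1..m}"
  by (simp add: sum_list_distinct_conv_sum_set atLeastLessThanSuc_atLeastAtMost del: upt_Suc)

lemma sum_list_map_filter_neq_eq_sum:
  "sum_list (map f (filter (\<lambda>p. p \<noteq> i) [1..<Suc n])) = sum f ({1..n} - {i})"
proof -
  have "set (filter (\<lambda>p. p \<noteq> i) [1..<Suc n]) = {1..n} - {i}"
    by auto
  then show ?thesis
    by (simp add: sum_list_distinct_conv_sum_set del: upt_Suc)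
qed

lemma rep_eval_append: "rep_eval sc (xs @ ys) z = rep_eval sc xs z + rep_eval sc ys z"
  by (simp add: rep_eval_def)

lemma KZ_A_eval:
  "rep_eval sc (KZ_A n m alpha Sg Y nu i) z =
    (\<Sum>k=1..m. sc (1 / (z i - alpha k)) * Y i k) +
    (\<Sum>p\<in>{1..n}-{i}. sc (- 1 / (z i - z p)) * (nu * Sg (Transposition.transpose i p)))"
  unfolding KZ_A_def rep_eval_append rep_eval_def map_map
  by (simp only: sum_list_append map_append map_map sum_list_map_upt_Suc_eq_sum
      sum_list_map_filter_neq_eq_sum o_def split)

lemma KZ_A_pderiv_eval:
  "rep_eval sc (rep_pderiv i (KZ_A n m alpha Sg Y nu j)) z =
    (\<Sum>k=1..m. sc (deriv (\<lambda>w. 1 / ((z(i:=w)) j - alpha k)) (z i)) * Y j k) +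
    (\<Sum>p\<in>{1..n}-{j}. sc (deriv (\<lambda>w. - 1 / ((z(i:=w)) j - (z(i:=w)) p)) (z i))
       * (nu * Sg (Transposition.transpose j p)))"
  unfolding KZ_A_def rep_pderiv_def map_append rep_eval_append rep_eval_def map_map
  by (simp only: sum_list_append map_append map_map sum_list_map_upt_Suc_eq_sum
      sum_list_map_filter_neq_eq_sum o_def split)

lemma deriv_minus_inverse_diff: "c \<noteq> x \<Longrightarrow> deriv (\<lambda>w. - (1 / (c - w))) x = - (1 / (c - x)\<^sup>2)"
  by (rule DERIV_imp_deriv) (auto intro!: derivative_eq_intros simp: field_simps power2_eq_square)

lemma KZ_A_pderiv_eval_other:
  assumes sc: "scalar_structure sc" and "i \<noteq> j" "i \<in> {1..n}" "z i \<noteq> z j"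
  shows "rep_eval sc (rep_pderiv i (KZ_A n m alpha Sg Y nu j)) z
     = sc (- 1 / (z i - z j)\<^sup>2) * (nu * Sg (Transposition.transpose i j))"
proof -
  have "(\<Sum>p\<in>{1..n}-{j}. sc (deriv (\<lambda>w. - 1 / ((z(i:=w)) j - (z(i:=w)) p)) (z i))
          * (nu * Sg (Transposition.transpose j p)))
     = sc (deriv (\<lambda>w. - 1 / ((z(i:=w)) j - (z(i:=w)) i)) (z i))
         * (nu * Sg (Transposition.transpose j i))"
    by (rule sum_eq_single)
      (use assms in \<open>auto simp: scalar_structure_zero[OF sc]\<close>)
  moreover have "(\<Sum>k=1..m. sc (deriv (\<lambda>w. 1 / ((z(i:=w)) j - alpha k)) (z i)) * Y j k) = 0"
    using assms by (simp add: scalar_structure_zero[OF sc])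
  ultimately show ?thesis
    using assms by (simp add: KZ_A_pderiv_eval deriv_minus_inverse_diff power2_commute
        transpose_commute)
qed

lemma transpose_comp_commute_disjoint:
  assumes "a \<noteq> c" "a \<noteq> e" "b \<noteq> c" "b \<noteq> e"
  shows "Transposition.transpose a b \<circ> Transposition.transpose c e
       = Transposition.transpose c e \<circ> Transposition.transpose a b"
  using assms by (auto simp: fun_eq_iff Transposition.transpose_def)

text \<open>Oriented so that, instantiated at \<open>i j r\<close>, simp rewrites every product of two of
  \<open>(i j), (j r), (i r)\<close> to one of the two 3-cycles \<open>(i j)(j r)\<close> and \<open>(j r)(i j)\<close>.\<close>
lemma transpose_comp_three_cycle:
  assumes "i \<noteq> j" "j \<noteq> r" "i \<noteq> r"
  shows "Transposition.transpose j r \<circ> Transposition.transpose i r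
       = Transposition.transpose i j \<circ> Transposition.transpose j r"
    and "Transposition.transpose i r \<circ> Transposition.transpose i j
       = Transposition.transpose i j \<circ> Transposition.transpose j r"
    and "Transposition.transpose i j \<circ> Transposition.transpose i r
       = Transposition.transpose j r \<circ> Transposition.transpose i j"
    and "Transposition.transpose i r \<circ> Transposition.transpose j r
       = Transposition.transpose j r \<circ> Transposition.transpose i j"
  using assms by (auto simp: fun_eq_iff Transposition.transpose_def)

lemma partial_fractions_fixed_pole:
  fixes a b c :: "'a::field"
  assumes "a \<noteq> c" "b \<noteq> c" "a \<noteq> b"
  shows "1 / (a - c) * (1 / (b - c)) + 1 / (a - c) * (- 1 / (b - a)) + - 1 / (a - b) * (1 / (b - c))
       = 0"
proof -
  have "a - c \<noteq> 0" "b - c \<noteq> 0" "a - b \<noteq> 0" "b - a \<noteq> 0"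
    using assms by auto
  then show ?thesis
    by (simp add: divide_simps) (simp add: algebra_simps)
qed

lemma partial_fractions_three_points:
  fixes a b c :: "'a::field"
  assumes "a \<noteq> c" "b \<noteq> c" "a \<noteq> b"
  shows "- 1 / (a - b) * (- 1 / (b - c)) + - 1 / (a - c) * (- 1 / (b - a))
       = - 1 / (a - c) * (- 1 / (b - c))"
proof -
  have "a - c \<noteq> 0" "b - c \<noteq> 0" "a - b \<noteq> 0" "b - a \<noteq> 0"
    using assms by auto
  then show ?thesis
    by (simp add: divide_simps) (simp add: algebra_simps)
qed

context
  fixes n m :: nat and d :: "nat \<Rightarrow> nat" and sc :: "complex \<Rightarrow> 'a::ring_1"
    and Sg :: "(nat \<Rightarrow> nat) \<Rightarrow> 'a" and Y gam :: "nat \<Rightarrow> nat \<Rightarrow> 'a" and nu :: 'a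
  assumes sc: "scalar_structure sc"
    and rel: "Bn_relations n m d Sg Y gam nu"
begin

abbreviation s :: "nat \<Rightarrow> nat \<Rightarrow> 'a" where
  "s a b \<equiv> Sg (Transposition.transpose a b)"

lemma Bn_central_nu: "central nu"
  using rel unfolding Bn_relations_def by blast

lemma Bn_transpose_mult:
  assumes "a \<in> {1..n}" "b \<in> {1..n}" "c \<in> {1..n}" "e \<in> {1..n}"
  shows "s a b * s c e = Sg (Transposition.transpose a b \<circ> Transposition.transpose c e)"
  using rel permutes_swap_id[OF assms(1,2)] permutes_swap_id[OF assms(3,4)]
  unfolding Bn_relations_def by simp

lemma Bn_transpose_Y_swap:
  "a \<in> {1..n} \<Longrightarrow> b \<in> {1..n} \<Longrightarrow> a \<noteq> b \<Longrightarrow> k \<in> {1..m} \<Longrightarrow> s a b * Y a k = Y b k * s a b"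
  using rel unfolding Bn_relations_def by blast

lemma Bn_transpose_Y_fix:
  "a \<in> {1..n} \<Longrightarrow> b \<in> {1..n} \<Longrightarrow> a \<noteq> b \<Longrightarrow> h \<in> {1..n} \<Longrightarrow> h \<noteq> a \<Longrightarrow> h \<noteq> b \<Longrightarrow> k \<in> {1..m}
    \<Longrightarrow> s a b * Y h k = Y h k * s a b"
  using rel unfolding Bn_relations_def by blast

lemma Bn_commutator_Y_same_leg:
  "a \<in> {1..n} \<Longrightarrow> b \<in> {1..n} \<Longrightarrow> a \<noteq> b \<Longrightarrow> k \<in> {1..m}
    \<Longrightarrow> commutator (Y a k) (Y b k) = nu * (Y a k - Y b k) * s a b"
  using rel unfolding Bn_relations_def by blast

lemma Bn_commutator_Y_other_leg:
  "a \<in> {1..n} \<Longrightarrow> b \<in> {1..n} \<Longrightarrow> a \<noteq> b \<Longrightarrow> k \<in> {1..m} \<Longrightarrow> l \<in> {1..m} \<Longrightarrow> k \<noteq> l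
    \<Longrightarrow> commutator (Y a k) (Y b l) = 0"
  using rel unfolding Bn_relations_def by blast

lemma commutator_Y_nu_transpose:
  assumes "a \<in> {1..n}" "b \<in> {1..n}" "a \<noteq> b" "k \<in> {1..m}"
  shows "commutator (Y a k) (nu * s b a) = commutator (Y a k) (Y b k)"
  using commutator_central_scaled_right[OF Bn_central_nu Bn_transpose_Y_swap[OF assms]]
    Bn_commutator_Y_same_leg[OF assms]
  by (simp add: transpose_commute)

lemma commutator_nu_transpose_Y:
  assumes "a \<in> {1..n}" "b \<in> {1..n}" "a \<noteq> b" "k \<in> {1..m}"
  shows "commutator (nu * s a b) (Y b k) = commutator (Y a k) (Y b k)"
  using commutator_central_scaled_left[OF Bn_central_nu, of "s a b" "Y b k" "Y a k"]
    Bn_transpose_Y_swap[of b a k] Bn_commutator_Y_same_leg[OF assms] assms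
  by (simp add: transpose_commute)

lemma commutator_Y_nu_transpose_eq_0:
  assumes "a \<in> {1..n}" "b \<in> {1..n}" "a \<noteq> b" "h \<in> {1..n}" "h \<noteq> a" "h \<noteq> b" "k \<in> {1..m}"
  shows "commutator (Y h k) (nu * s a b) = 0" and "commutator (nu * s a b) (Y h k) = 0"
  using commutator_central_scaled_eq_0[OF Bn_central_nu Bn_transpose_Y_fix[OF assms]] by simp_all

lemma Bn_transpose_commute_disjoint:
  assumes "a \<in> {1..n}" "b \<in> {1..n}" "c \<in> {1..n}" "e \<in> {1..n}"
    and "a \<noteq> c" "a \<noteq> e" "b \<noteq> c" "b \<noteq> e"
  shows "s a b * s c e = s c e * s a b"
  using Bn_transpose_mult[of a b c e] Bn_transpose_mult[of c e a b]
    transpose_comp_commute_disjoint[of a c e b] assms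
  by simp

lemma Bn_commutator_transpose_three:
  assumes "i \<in> {1..n}" "j \<in> {1..n}" "r \<in> {1..n}" "i \<noteq> j" "j \<noteq> r" "i \<noteq> r"
  shows "commutator (s i r) (s i j) = commutator (s i j) (s j r)"
    and "commutator (s i r) (s j r) = - commutator (s i j) (s j r)"
  using assms by (simp_all add: commutator_def Bn_transpose_mult transpose_comp_three_cycle[of i j r])

context
  fixes i j :: nat
  assumes i: "i \<in> {1..n}" and j: "j \<in> {1..n}" and ij: "i \<noteq> j"
begin

lemma commutator_Y_sum_Y_sum:
  "commutator (\<Sum>k=1..m. sc (f k) * Y i k) (\<Sum>k=1..m. sc (g k) * Y j k)
     = (\<Sum>k=1..m. sc (f k * g k) * commutator (Y i k) (Y j k))"
proof -
  have "(\<Sum>l=1..m. sc (f k * g l) * commutator (Y i k) (Y j l))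
      = sc (f k * g k) * commutator (Y i k) (Y j k)" if "k \<in> {1..m}" for k
    by (rule sum_eq_single) (use that i j ij in \<open>auto simp: Bn_commutator_Y_other_leg\<close>)
  then show ?thesis
    by (simp add: commutator_sum_scaled[OF sc])
qed

lemma commutator_Y_sum_transpose_sum:
  "commutator (\<Sum>k=1..m. sc (f k) * Y i k) (\<Sum>q\<in>{1..n}-{j}. sc (g q) * (nu * s j q))
     = (\<Sum>k=1..m. sc (f k * g i) * commutator (Y i k) (Y j k))"
proof -
  have "(\<Sum>q\<in>{1..n}-{j}. sc (f k * g q) * commutator (Y i k) (nu * s j q))
      = sc (f k * g i) * commutator (Y i k) (Y j k)" if "k \<in> {1..m}" for k
    using that i j ij
    by (subst sum_eq_single[where k = i])
      (auto simp: commutator_Y_nu_transpose_eq_0 commutator_Y_nu_transpose)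
  then show ?thesis
    by (simp add: commutator_sum_scaled[OF sc])
qed

lemma commutator_transpose_sum_Y_sum:
  "commutator (\<Sum>p\<in>{1..n}-{i}. sc (f p) * (nu * s i p)) (\<Sum>k=1..m. sc (g k) * Y j k)
     = (\<Sum>k=1..m. sc (f j * g k) * commutator (Y i k) (Y j k))"
proof -
  have "(\<Sum>p\<in>{1..n}-{i}. \<Sum>k=1..m. sc (f p * g k) * commutator (nu * s i p) (Y j k))
      = (\<Sum>k=1..m. sc (f j * g k) * commutator (nu * s i j) (Y j k))"
    using i j ij
    by (subst sum_eq_single[where k = j]) (auto simp: commutator_Y_nu_transpose_eq_0)
  also have "\<dots> = (\<Sum>k=1..m. sc (f j * g k) * commutator (Y i k) (Y j k))"
    using i j ij by (simp add: commutator_nu_transpose_Y)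
  finally show ?thesis
    by (simp add: commutator_sum_scaled[OF sc])
qed

lemma commutator_transpose_sum_transpose_sum_eq_0:
  assumes zd: "\<forall>a\<in>{1..n}. \<forall>b\<in>{1..n}. a \<noteq> b \<longrightarrow> z a \<noteq> z b"
  shows "commutator (\<Sum>p\<in>{1..n}-{i}. sc (- 1 / (z i - z p)) * (nu * s i p))
                    (\<Sum>q\<in>{1..n}-{j}. sc (- 1 / (z j - z q)) * (nu * s j q)) = 0"
proof -
  define G where
    "G p q = sc (- 1 / (z i - z p) * (- 1 / (z j - z q))) * (nu * nu * commutator (s i p) (s j q))"
    for p q
  define R where "R = {1..n} - {i, j}"
  have R: "{1..n}-{i} = insert j R" "{1..n}-{j} = insert i R" "j \<notin> R" "i \<notin> R" "finite R"
    using i j ij by (auto simp: R_def)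
  have G_j_i: "G j i = 0"
    by (simp add: G_def commutator_def transpose_commute)
  have G_diagonal: "(\<Sum>q\<in>R. G p q) = G p p" if p: "p \<in> R" for p
  proof (rule sum_eq_single)
    fix q assume q: "q \<in> R" "q \<noteq> p"
    then have "s i p * s j q = s j q * s i p"
      using p i j ij by (intro Bn_transpose_commute_disjoint) (auto simp: R_def)
    then show "G p q = 0"
      by (simp add: G_def commutator_def)
  qed (use p R in auto)
  have G_triangle: "G j r + G r i + G r r = 0" if "r \<in> R" for r
  proof -
    have r: "r \<in> {1..n}" "j \<noteq> r" "i \<noteq> r"
      using that by (auto simp: R_def)
    define E where "E = nu * nu * commutator (s i j) (s j r)"
    define x y w where "x = - 1 / (z i - z j) * (- 1 / (z j - z r))"
      and "y = - 1 / (z i - z r) * (- 1 / (z j - z i))"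
      and "w = - 1 / (z i - z r) * (- 1 / (z j - z r))"
    have "x + y = w"
      unfolding x_def y_def w_def
      using partial_fractions_three_points[of "z i" "z r" "z j"] zd i j r ij by auto
    then have "sc x + sc y = sc w"
      by (metis sc scalar_structure_add)
    moreover have "G j r = sc x * E" "G r i = sc y * E" "G r r = - (sc w * E)"
      using Bn_commutator_transpose_three[OF i j r(1) ij r(2,3)]
      by (simp_all add: G_def E_def x_def y_def w_def transpose_commute)
    ultimately show ?thesis
      by (simp add: distrib_right[symmetric])
  qed
  have "commutator (\<Sum>p\<in>{1..n}-{i}. sc (- 1 / (z i - z p)) * (nu * s i p))
                   (\<Sum>q\<in>{1..n}-{j}. sc (- 1 / (z j - z q)) * (nu * s j q))
      = (\<Sum>p\<in>insert j R. \<Sum>q\<in>insert i R. G p q)"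
    unfolding G_def R(1,2)[symmetric]
    by (simp add: commutator_sum_scaled[OF sc] commutator_central_scaled[OF Bn_central_nu])
  also have "\<dots> = G j i + (\<Sum>r\<in>R. G j r) + (\<Sum>p\<in>R. G p i + (\<Sum>q\<in>R. G p q))"
    using R by (simp add: add.assoc)
  also have "\<dots> = (\<Sum>r\<in>R. G j r + G r i + G r r)"
    using G_j_i G_diagonal by (simp add: sum.distrib)
  also have "\<dots> = 0"
    using G_triangle by simp
  finally show ?thesis .
qed

lemma KZ_A_commutator_eq_0:
  assumes zd: "\<forall>a\<in>{1..n}. \<forall>b\<in>{1..n}. a \<noteq> b \<longrightarrow> z a \<noteq> z b"
    and za: "\<forall>a\<in>{1..n}. \<forall>k\<in>{1..m}. z a \<noteq> alpha k"
  shows "commutator (rep_eval sc (KZ_A n m alpha Sg Y nu i) z) (rep_eval sc (KZ_A n m alpha Sg Y nu j) z)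
       = 0"
proof -
  have "sc (1 / (z i - alpha k) * (1 / (z j - alpha k))) * commutator (Y i k) (Y j k)
      + sc (1 / (z i - alpha k) * (- 1 / (z j - z i))) * commutator (Y i k) (Y j k)
      + sc (- 1 / (z i - z j) * (1 / (z j - alpha k))) * commutator (Y i k) (Y j k) = 0"
    if "k \<in> {1..m}" for k
    using that zd za i j ij
    by (intro scalar_structure_scaled_sum_eq_0[OF sc] partial_fractions_fixed_pole) auto
  then show ?thesis
    unfolding KZ_A_eval commutator_add_add commutator_Y_sum_Y_sum commutator_Y_sum_transpose_sum
      commutator_transpose_sum_Y_sum commutator_transpose_sum_transpose_sum_eq_0[OF zd]
    by (simp add: sum.distrib[symmetric])
qed

end

end

theorem lemma4p1:
  fixes n m :: nat and d :: "nat \<Rightarrow> nat" and alpha :: "nat \<Rightarrow> complex"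
    and sc :: "complex \<Rightarrow> 'a::ring_1"
    and Sg :: "(nat \<Rightarrow> nat) \<Rightarrow> 'a" and Y gam :: "nat \<Rightarrow> nat \<Rightarrow> 'a" and nu :: 'a
    and z :: "nat \<Rightarrow> complex" and i j :: nat
  assumes "scalar_structure sc"
    and "Bn_relations n m d Sg Y gam nu"
    and "inj_on alpha {1..m}"
    and "\<forall>a\<in>{1..n}. \<forall>b\<in>{1..n}. a \<noteq> b \<longrightarrow> z a \<noteq> z b"
    and "\<forall>a\<in>{1..n}. \<forall>k\<in>{1..m}. z a \<noteq> alpha k"
    and "i \<in> {1..n}" and "j \<in> {1..n}"
  shows "rep_eval sc (rep_pderiv i (KZ_A n m alpha Sg Y nu j)) z
         - rep_eval sc (rep_pderiv j (KZ_A n m alpha Sg Y nu i)) z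
         + commutator (rep_eval sc (KZ_A n m alpha Sg Y nu i) z)
                      (rep_eval sc (KZ_A n m alpha Sg Y nu j) z) = 0"
proof (cases "i = j")
  case True
  then show ?thesis
    by (simp add: commutator_def)
next
  case False
  have "z i \<noteq> z j"
    using assms(4,6,7) False by auto
  then have "rep_eval sc (rep_pderiv i (KZ_A n m alpha Sg Y nu j)) z
           = rep_eval sc (rep_pderiv j (KZ_A n m alpha Sg Y nu i)) z"
    using KZ_A_pderiv_eval_other[OF assms(1) False assms(6)]
      KZ_A_pderiv_eval_other[OF assms(1) False[symmetric] assms(7)]
    by (simp add: power2_commute transpose_commute)
  moreover have "commutator (rep_eval sc (KZ_A n m alpha Sg Y nu i) z)
                            (rep_eval sc (KZ_A n m alpha Sg Y nu j) z) = 0"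
    using KZ_A_commutator_eq_0[OF assms(1,2,6,7) False assms(4,5)] .
  ultimately show ?thesis
    by simp
qed

end
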